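(* If $\mathcal F=(X,\le,R,S)$ is a WHB-frame, then $\mathcal A(\mathcal F)=(\mathrm{Up}(X),\cap,\cup,\Rightarrow_R,\Leftarrow_S,\emptyset,X)$ is a WHB-algebra.
   Context: A WHB-frame is $(X,\le,R,S)$ with $\le$ a partial order on $X$ and $R,S$ binary relations on $X$ such that: if $x\le y$ and $(y,z)\in R$ then $(x,z)\in R$; if $x\le y$ and $(x,z)\in S$ then $(y,z)\in S$; and $S=R^{-1}$ (i.e. $(x,y)\in S$ iff $(y,x)\in R$). $\mathrm{Up}(X)$ is the set of upsets of $(X,\le)$; for $U,V\in\mathrm{Up}(X)$, $U\Rightarrow_R V=\{x\colon R(x)\cap U\subseteq V\}$ and $U\Leftarrow_S V=\{x\colon S(x)\cap(U\setminus V)\neq\emptyset\}$, where $\mathcal R(x)=\{y\colon(x,y)\in\mathcal R\}$. A WHB-algebra is an algebra $(A,\wedge,\vee,\to,\leftarrow,0,1)$ such that $(A,\wedge,\vee,0,1)$ is a bounded distributive lattice and for all $a,b,c\in A$: $a\to a=1$; $a\to(b\wedge c)=(a\to b)\wedge(a\to c)$; $(a\vee b)\to c=(a\to c)\wedge(b\to c)$; $(a\to b)\wedge(b\to c)\le a\to c$; $a\leftarrow a=0$; $(a\vee b)\leftarrow c=(a\leftarrow c)\vee(b\leftarrow c)$; $a\leftarrow(b\wedge c)=(a\leftarrow b)\vee(a\leftarrow c)$; $a\leftarrow c\le(a\leftarrow b)\vee(b\leftarrow c)$; $a\wedge((a\to b)\leftarrow 0)\le b$; $a\le b\vee(1\to(a\leftarrow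 b))$. *)

theory Defs
  imports Main
begin

definition partial_order_on_set :: "'a set \<Rightarrow> ('a \<times> 'a) set \<Rightarrow> bool" where
  "partial_order_on_set X le \<longleftrightarrow>
     le \<subseteq> X \<times> X \<and>
     (\<forall>x\<in>X. (x, x) \<in> le) \<and>
     (\<forall>x y. (x, y) \<in> le \<and> (y, x) \<in> le \<longrightarrow> x = y) \<and>
     (\<forall>x y z. (x, y) \<in> le \<and> (y, z) \<in> le \<longrightarrow> (x, z) \<in> le)"

definition WHB_frame :: "'a set \<Rightarrow> ('a \<times> 'a) set \<Rightarrow> ('a \<times> 'a) set \<Rightarrow> ('a \<times> 'a) set \<Rightarrow> bool" where
  "WHB_frame X le R S \<longleftrightarrow>
     partial_order_on_set X le \<and> R \<subseteq> X \<times> X \<and> S \<subseteq> X \<times> X \<and>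
     (\<forall>x y z. (x, y) \<in> le \<and> (y, z) \<in> R \<longrightarrow> (x, z) \<in> R) \<and>
     (\<forall>x y z. (x, y) \<in> le \<and> (x, z) \<in> S \<longrightarrow> (y, z) \<in> S) \<and>
     S = R\<inverse>"

definition Up :: "'a set \<Rightarrow> ('a \<times> 'a) set \<Rightarrow> 'a set set" where
  "Up X le = {U. U \<subseteq> X \<and> (\<forall>x y. x \<in> U \<and> (x, y) \<in> le \<longrightarrow> y \<in> U)}"

definition rimp :: "'a set \<Rightarrow> ('a \<times> 'a) set \<Rightarrow> 'a set \<Rightarrow> 'a set \<Rightarrow> 'a set" where
  "rimp X R U V = {x \<in> X. R `` {x} \<inter> U \<subseteq> V}"

definition lcoimp :: "'a set \<Rightarrow> ('a \<times> 'a) set \<Rightarrow> 'a set \<Rightarrow> 'a set \<Rightarrow> 'a set" where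
  "lcoimp X S U V = {x \<in> X. S `` {x} \<inter> (U - V) \<noteq> {}}"

definition WHB_algebra ::
  "'b set \<Rightarrow> ('b \<Rightarrow> 'b \<Rightarrow> 'b) \<Rightarrow> ('b \<Rightarrow> 'b \<Rightarrow> 'b) \<Rightarrow> ('b \<Rightarrow> 'b \<Rightarrow> 'b) \<Rightarrow> ('b \<Rightarrow> 'b \<Rightarrow> 'b)
   \<Rightarrow> 'b \<Rightarrow> 'b \<Rightarrow> bool" where
  "WHB_algebra A meet join imp coimp zer one \<longleftrightarrow>
    \<comment> \<open>closure\<close>
    zer \<in> A \<and> one \<in> A \<and>
    (\<forall>a\<in>A. \<forall>b\<in>A. meet a b \<in> A \<and> join a b \<in> A \<and> imp a b \<in> A \<and> coimp a b \<in> A) \<and>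
    \<comment> \<open>bounded distributive lattice\<close>
    (\<forall>a\<in>A. \<forall>b\<in>A. meet a b = meet b a \<and> join a b = join b a) \<and>
    (\<forall>a\<in>A. \<forall>b\<in>A. \<forall>c\<in>A. meet a (meet b c) = meet (meet a b) c \<and> join a (join b c) = join (join a b) c) \<and>
    (\<forall>a\<in>A. \<forall>b\<in>A. meet a (join a b) = a \<and> join a (meet a b) = a) \<and>
    (\<forall>a\<in>A. \<forall>b\<in>A. \<forall>c\<in>A. meet a (join b c) = join (meet a b) (meet a c)) \<and>
    (\<forall>a\<in>A. meet a zer = zer \<and> join a one = one) \<and>
    \<comment> \<open>axioms; a \<le> b means meet a b = a\<close>
    (\<forall>a\<in>A. imp a a = one) \<and>
    (\<forall>a\<in>A. \<forall>b\<in>A. \<forall>c\<in>A. imp a (meet b c) = meet (imp a b) (imp a c)) \<and>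
    (\<forall>a\<in>A. \<forall>b\<in>A. \<forall>c\<in>A. imp (join a b) c = meet (imp a c) (imp b c)) \<and>
    (\<forall>a\<in>A. \<forall>b\<in>A. \<forall>c\<in>A. meet (meet (imp a b) (imp b c)) (imp a c) = meet (imp a b) (imp b c)) \<and>
    (\<forall>a\<in>A. coimp a a = zer) \<and>
    (\<forall>a\<in>A. \<forall>b\<in>A. \<forall>c\<in>A. coimp (join a b) c = join (coimp a c) (coimp b c)) \<and>
    (\<forall>a\<in>A. \<forall>b\<in>A. \<forall>c\<in>A. coimp a (meet b c) = join (coimp a b) (coimp a c)) \<and>
    (\<forall>a\<in>A. \<forall>b\<in>A. \<forall>c\<in>A. meet (coimp a c) (join (coimp a b) (coimp b c)) = coimp a c) \<and>
    (\<forall>a\<in>A. \<forall>b\<in>A. meet (meet a (coimp (imp a b) zer)) b = meet a (coimp (imp a b) zer)) \<and>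
    (\<forall>a\<in>A. \<forall>b\<in>A. meet a (join b (imp one (coimp a b))) = a)"

end

theory Submission
  imports Defs
begin

text \<open>
  Every axiom of a WHB-algebra holds in \<open>\<A>(\<F>)\<close> for purely set-theoretic reasons: the
  lattice axioms because upsets form a ring of sets, the axioms for \<open>\<Rightarrow>\<^sub>R\<close> and \<open>\<Leftarrow>\<^sub>S\<close> for
  arbitrary relations, and the two mixed axioms because \<open>S = R\<inverse>\<close>. The monotonicity
  conditions of the frame are needed only to see that \<open>\<Rightarrow>\<^sub>R\<close> and \<open>\<Leftarrow>\<^sub>S\<close> map upsets to upsets.
\<close>

lemma WHB_algebra_of_sets:
  assumes sub: "A \<subseteq> Pow X" and "{} \<in> A" and "X \<in> A"
    and "\<And>a b. a \<in> A \<Longrightarrow> b \<in> A \<Longrightarrow> a \<inter> b \<in> A"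
    and "\<And>a b. a \<in> A \<Longrightarrow> b \<in> A \<Longrightarrow> a \<union> b \<in> A"
    and "\<And>a b. a \<in> A \<Longrightarrow> b \<in> A \<Longrightarrow> imp a b \<in> A"
    and "\<And>a b. a \<in> A \<Longrightarrow> b \<in> A \<Longrightarrow> coimp a b \<in> A"
    and "\<And>a. imp a a = X"
    and "\<And>a b c. imp a (b \<inter> c) = imp a b \<inter> imp a c"
    and "\<And>a b c. imp (a \<union> b) c = imp a c \<inter> imp b c"
    and imp_trans: "\<And>a b c. imp a b \<inter> imp b c \<subseteq> imp a c"
    and "\<And>a. coimp a a = {}"
    and "\<And>a b c. coimp (a \<union> b) c = coimp a c \<union> coimp b c"
    and "\<And>a b c. coimp a (b \<inter> c) = coimp a b \<union> coimp a c"
    and coimp_trans: "\<And>a b c. coimp a c \<subseteq> coimp a b \<union> coimp b c"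
    and meet_le: "\<And>a b. a \<inter> coimp (imp a b) {} \<subseteq> b"
    and le_join: "\<And>a b. a \<in> A \<Longrightarrow> a \<subseteq> b \<union> imp X (coimp a b)"
  shows "WHB_algebra A (\<inter>) (\<union>) imp coimp {} X"
  unfolding WHB_algebra_def
proof (intro conjI ballI)
qed (rule assms; assumption | blast dest: subsetD[OF sub]
     | use imp_trans coimp_trans meet_le le_join in blast)+

lemma Up_empty: "{} \<in> Up X le"
  unfolding Up_def by blast

lemma Up_carrier: "le \<subseteq> X \<times> X \<Longrightarrow> X \<in> Up X le"
  unfolding Up_def by blast

lemma Up_Int: "U \<in> Up X le \<Longrightarrow> V \<in> Up X le \<Longrightarrow> U \<inter> V \<in> Up X le"
  unfolding Up_def by blast

lemma Up_Un: "U \<in> Up X le \<Longrightarrow> V \<in> Up X le \<Longrightarrow> U \<union> V \<in> Up X le"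
  unfolding Up_def by blast

lemma Up_subset_Pow: "Up X le \<subseteq> Pow X"
  unfolding Up_def by blast

lemma Up_subset: "U \<in> Up X le \<Longrightarrow> U \<subseteq> X"
  unfolding Up_def by blast

lemma rimp_in_Up:
  assumes "le \<subseteq> X \<times> X" and "\<And>x y z. (x, y) \<in> le \<Longrightarrow> (y, z) \<in> R \<Longrightarrow> (x, z) \<in> R"
  shows "rimp X R U V \<in> Up X le"
  using assms unfolding Up_def rimp_def by blast

lemma lcoimp_in_Up:
  assumes "le \<subseteq> X \<times> X" and "\<And>x y z. (x, y) \<in> le \<Longrightarrow> (x, z) \<in> S \<Longrightarrow> (y, z) \<in> S"
  shows "lcoimp X S U V \<in> Up X le"
  using assms unfolding Up_def lcoimp_def by blast

lemma rimp_self: "rimp X R U U = X"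
  unfolding rimp_def by blast

lemma rimp_Int: "rimp X R U (V \<inter> W) = rimp X R U V \<inter> rimp X R U W"
  unfolding rimp_def by blast

lemma rimp_Un: "rimp X R (U \<union> V) W = rimp X R U W \<inter> rimp X R V W"
  unfolding rimp_def by blast

lemma rimp_trans: "rimp X R U V \<inter> rimp X R V W \<subseteq> rimp X R U W"
  unfolding rimp_def by blast

lemma lcoimp_self: "lcoimp X S U U = {}"
  unfolding lcoimp_def by blast

lemma lcoimp_Un: "lcoimp X S (U \<union> V) W = lcoimp X S U W \<union> lcoimp X S V W"
  unfolding lcoimp_def by blast

lemma lcoimp_Int: "lcoimp X S U (V \<inter> W) = lcoimp X S U V \<union> lcoimp X S U W"
  unfolding lcoimp_def by blast

lemma lcoimp_trans: "lcoimp X S U W \<subseteq> lcoimp X S U V \<union> lcoimp X S V W"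
  unfolding lcoimp_def by blast

lemma Int_lcoimp_rimp_subset: "U \<inter> lcoimp X (R\<inverse>) (rimp X R U V) {} \<subseteq> V"
  unfolding lcoimp_def rimp_def by blast

lemma subset_Un_rimp_lcoimp: "U \<subseteq> X \<Longrightarrow> U \<subseteq> V \<union> rimp X R X (lcoimp X (R\<inverse>) U V)"
  unfolding lcoimp_def rimp_def by blast

theorem theorem4p7:
  fixes X :: "'a set" and le R S :: "('a \<times> 'a) set"
  assumes "WHB_frame X le R S"
  shows "WHB_algebra (Up X le) (\<inter>) (\<union>) (rimp X R) (lcoimp X S) {} X"
proof -
  have le: "le \<subseteq> X \<times> X"
    using assms unfolding WHB_frame_def partial_order_on_set_def by blast
  have R_mono: "\<And>x y z. (x, y) \<in> le \<Longrightarrow> (y, z) \<in> R \<Longrightarrow> (x, z) \<in> R"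
    and S_mono: "\<And>x y z. (x, y) \<in> le \<Longrightarrow> (x, z) \<in> S \<Longrightarrow> (y, z) \<in> S"
    and S: "S = R\<inverse>"
    using assms unfolding WHB_frame_def by blast+
  show ?thesis
  proof (rule WHB_algebra_of_sets)
    show "\<And>a b. a \<inter> lcoimp X S (rimp X R a b) {} \<subseteq> b"
      unfolding S by (rule Int_lcoimp_rimp_subset)
    show "\<And>a b. a \<in> Up X le \<Longrightarrow> a \<subseteq> b \<union> rimp X R X (lcoimp X S a b)"
      unfolding S by (rule subset_Un_rimp_lcoimp[OF Up_subset])
  qed (simp_all add: Up_subset_Pow Up_empty Up_carrier[OF le] Up_Int Up_Un
        rimp_in_Up[OF le R_mono] lcoimp_in_Up[OF le S_mono]
        rimp_self rimp_Int rimp_Un rimp_trans lcoimp_self lcoimp_Un lcoimp_Int lcoimp_trans)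
qed

end
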